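(* Fix $0<d<1$ and let $c(x)=x^d$. For games with $n$ jobs and cost function $c$, the worst-case price of anarchy of the coordination mechanism described in the context is $\Omega\!\left(n^{d(1-d)}\right)$.
   Context: A game consists of a cost function $c$ (here $c(x)=x^d$, $c(0)=0$), slots $t=1,\dots,T$, and a set of $n$ jobs, each job $j$ having integer release time $r_j$ and deadline $d_j$ with $0<r_j<d_j<T$. An assignment $s$ gives each job a slot $s_j$ with $r_j\le s_j<d_j$; the load is $l_t(s)=|\{j:s_j=t\}|$ and $C(s)=\sum_{t=1}^T c(l_t(s))$. In the coordination mechanism, each job $j$ chooses a pair $(s_j,\xi_j)$ with $s_j\in[r_j,d_j)$ and payment $\xi_j\ge0$. Slot $t$ is opened iff $\sum_{j:s_j=t}\xi_j\ge c(l_t(s))$; a job whose slot is not opened has infinite cost, otherwise its cost is $\xi_j$. A profile $(s,\xi)$ is a Nash equilibrium if for every job $j$: (i) $\sum_{j':s_{j'}=s_j}\xi_{j'}\ge c(l_{s_j}(s))$; (ii) for every $t\in[r_j,d_j)\setminus\{s_j\}$, $\xi_j\le\max\{0,\,c(l_t(s)+1)-\sum_{j':s_{j'}=t}\xi_{j'}\}$; (iii) $\xi_j\le\max\{0,\,c(l_{s_j}(s))-\sum_{j':s_{j'}=s_j,\,j'\ne j}\xi_{j'}\}$. The price of anarchy of the mechanism on a game is $\max C(s)/\min_{s^*}C(s^* )$, the maximum over Nash equilibria $(s,\xi)$ and the minimum over all assignments; the worst case for $n$ jobs is the supremum over games with $n$ jobs. *)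

theory Defs
  imports "HOL-Analysis.Analysis"
begin

text \<open>Jobs are 0..<n; job j has release time r j and deadline dl j; slots are 1..T.
  The cost function is c(x) = x powr e (note 0 powr e = 0).\<close>

definition cst :: "real \<Rightarrow> nat \<Rightarrow> real" where
  "cst e x = real x powr e"

definition valid_game :: "nat \<Rightarrow> nat \<Rightarrow> (nat \<Rightarrow> nat) \<Rightarrow> (nat \<Rightarrow> nat) \<Rightarrow> bool" where
  "valid_game n T r dl \<longleftrightarrow> (\<forall>j<n. 0 < r j \<and> r j < dl j \<and> dl j < T)"

definition valid_assign :: "nat \<Rightarrow> (nat \<Rightarrow> nat) \<Rightarrow> (nat \<Rightarrow> nat) \<Rightarrow> (nat \<Rightarrow> nat) \<Rightarrow> bool" where
  "valid_assign n r dl s \<longleftrightarrow> (\<forall>j<n. r j \<le> s j \<and> s j < dl j)"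

definition load :: "nat \<Rightarrow> (nat \<Rightarrow> nat) \<Rightarrow> nat \<Rightarrow> nat" where
  "load n s t = card {j. j < n \<and> s j = t}"

definition total_cost :: "real \<Rightarrow> nat \<Rightarrow> nat \<Rightarrow> (nat \<Rightarrow> nat) \<Rightarrow> real" where
  "total_cost e n T s = (\<Sum>t = 1..T. cst e (load n s t))"

definition opt_cost :: "real \<Rightarrow> nat \<Rightarrow> nat \<Rightarrow> (nat \<Rightarrow> nat) \<Rightarrow> (nat \<Rightarrow> nat) \<Rightarrow> real" where
  "opt_cost e n T r dl = Inf {total_cost e n T s | s. valid_assign n r dl s}"

definition pay :: "nat \<Rightarrow> (nat \<Rightarrow> nat) \<Rightarrow> (nat \<Rightarrow> real) \<Rightarrow> nat \<Rightarrow> real" where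
  "pay n s \<xi> t = (\<Sum>j' \<in> {j'. j' < n \<and> s j' = t}. \<xi> j')"

definition is_NE :: "real \<Rightarrow> nat \<Rightarrow> (nat \<Rightarrow> nat) \<Rightarrow> (nat \<Rightarrow> nat)
                      \<Rightarrow> (nat \<Rightarrow> nat) \<Rightarrow> (nat \<Rightarrow> real) \<Rightarrow> bool" where
  "is_NE e n r dl s \<xi> \<longleftrightarrow>
     valid_assign n r dl s \<and> (\<forall>j<n. \<xi> j \<ge> 0) \<and>
     (\<forall>j<n.
        pay n s \<xi> (s j) \<ge> cst e (load n s (s j)) \<and>
        (\<forall>t \<in> {r j..<dl j} - {s j}.
            \<xi> j \<le> max 0 (cst e (load n s t + 1) - pay n s \<xi> t)) \<and>
        \<xi> j \<le> max 0 (cst e (load n s (s j))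
                   - (\<Sum>j' \<in> {j'. j' < n \<and> s j' = s j \<and> j' \<noteq> j}. \<xi> j')))"

definition worst_poa :: "real \<Rightarrow> nat \<Rightarrow> ereal" where
  "worst_poa e n = (SUP g \<in> {(T, r, dl, s, \<xi>). valid_game n T r dl \<and> is_NE e n r dl s \<xi>}.
      (case g of (T, r, dl, s, \<xi>) \<Rightarrow>
         ereal (total_cost e n T s / opt_cost e n T r dl)))"

end

theory Submission
  imports Defs "HOL-Real_Asymp.Real_Asymp"
begin

text \<open>The lower-bound game uses the slots \<open>2, \<dots>, k + 1\<close>. Job \<open>j < k\<close> is confined to slot \<open>j + 2\<close>; every other job
  may use any of these slots. Spreading the jobs round-robin, with the confined job of each slot
  paying its whole cost and all other jobs paying nothing, is an equilibrium: the free jobs pay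
  nothing and the confined ones have nowhere to go. Its cost is about \<open>k (n / k)\<^sup>d\<close>, whereas
  leaving every job at its release slot puts all free jobs together into slot \<open>2\<close> and costs at
  most \<open>k + n\<^sup>d\<close>. For \<open>k = \<lceil>n\<^sup>d\<rceil>\<close> the ratio is of order \<open>n\<^bsup>d(1-d)\<^esup>\<close>.\<close>

lemma cst_nonneg: "0 \<le> cst e x"
  by (simp add: cst_def)

lemma load_le: "load n s t \<le> n"
proof -
  have "{j. j < n \<and> s j = t} \<subseteq> {..<n}"
    by auto
  then show ?thesis
    unfolding load_def by (metis card_lessThan card_mono finite_lessThan)
qed

lemma total_cost_nonneg: "0 \<le> total_cost e n T s"
  unfolding total_cost_def by (simp add: sum_nonneg cst_nonneg)

lemma valid_assign_release: "valid_game n T r dl \<Longrightarrow> valid_assign n r dl r"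
  by (simp add: valid_game_def valid_assign_def)

lemma total_cost_ge_1:
  assumes "valid_game n T r dl" "valid_assign n r dl s" "0 < n" "0 \<le> e"
  shows "1 \<le> total_cost e n T s"
proof -
  have "0 < r 0" "dl 0 < T" "r 0 \<le> s 0" "s 0 < dl 0"
    using assms(1-3) unfolding valid_game_def valid_assign_def by auto
  then have slot: "s 0 \<in> {1..T}"
    by simp
  have "{j. j < n \<and> s j = s 0} \<noteq> {}"
    using assms(3) by blast
  then have "1 \<le> load n s (s 0)"
    unfolding load_def by (simp add: Suc_le_eq card_gt_0_iff)
  then have "1 \<le> cst e (load n s (s 0))"
    unfolding cst_def using assms(4) by (simp add: ge_one_powr_ge_zero)
  also have "\<dots> \<le> total_cost e n T s"
    unfolding total_cost_def by (rule member_le_sum[OF slot]) (auto simp: cst_nonneg)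
  finally show ?thesis .
qed

lemma opt_cost_le_total_cost:
  assumes "valid_assign n r dl s"
  shows "opt_cost e n T r dl \<le> total_cost e n T s"
  unfolding opt_cost_def
  by (rule cInf_lower) (use assms total_cost_nonneg in \<open>auto intro: bdd_belowI[where m = 0]\<close>)

lemma opt_cost_ge_1:
  assumes "valid_game n T r dl" "0 < n" "0 \<le> e"
  shows "1 \<le> opt_cost e n T r dl"
  unfolding opt_cost_def
  by (rule cInf_greatest) (use assms valid_assign_release total_cost_ge_1 in blast)+

lemma worst_poa_ge_equilibrium:
  assumes "valid_game n T r dl" "is_NE e n r dl s \<xi>"
  shows "ereal (total_cost e n T s / opt_cost e n T r dl) \<le> worst_poa e n"
  unfolding worst_poa_def
  by (rule SUP_upper2[where i = "(T, r, dl, s, \<xi>)"]) (use assms in auto)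

definition lb_release :: "nat \<Rightarrow> nat \<Rightarrow> nat" where
  "lb_release k j = (if j < k then j + 2 else 2)"

definition lb_deadline :: "nat \<Rightarrow> nat \<Rightarrow> nat" where
  "lb_deadline k j = (if j < k then j + 3 else k + 2)"

definition round_robin :: "nat \<Rightarrow> nat \<Rightarrow> nat" where
  "round_robin k j = 2 + j mod k"

definition round_robin_payment :: "real \<Rightarrow> nat \<Rightarrow> nat \<Rightarrow> nat \<Rightarrow> real" where
  "round_robin_payment e n k j = (if j < k then cst e (load n (round_robin k) (j + 2)) else 0)"

lemma valid_game_lb: "0 < k \<Longrightarrow> valid_game n (k + 3) (lb_release k) (lb_deadline k)"
  by (auto simp: valid_game_def lb_release_def lb_deadline_def)

lemma valid_assign_round_robin:
  "0 < k \<Longrightarrow> valid_assign n (lb_release k) (lb_deadline k) (round_robin k)"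
  by (auto simp: valid_assign_def lb_release_def lb_deadline_def round_robin_def)

lemma is_NE_round_robin:
  assumes "0 < k"
  shows "is_NE e n (lb_release k) (lb_deadline k) (round_robin k) (round_robin_payment e n k)"
  unfolding is_NE_def
proof (intro conjI allI impI ballI)
  show "valid_assign n (lb_release k) (lb_deadline k) (round_robin k)"
    using assms by (rule valid_assign_round_robin)
next
  fix j assume "j < n"
  let ?i = "j mod k" and ?t = "round_robin k j"
  have "?i < n" "round_robin k ?i = ?t" "?i < k"
    using \<open>j < n\<close> assms
    by (auto simp: round_robin_def intro: le_less_trans[OF mod_less_eq_dividend])
  then have "round_robin_payment e n k ?i \<le> pay n (round_robin k) (round_robin_payment e n k) ?t"
    unfolding pay_def
    by (intro member_le_sum) (auto simp: round_robin_payment_def cst_nonneg)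
  moreover have "round_robin_payment e n k ?i = cst e (load n (round_robin k) ?t)"
    using \<open>?i < k\<close> by (simp add: round_robin_payment_def round_robin_def add.commute)
  ultimately show "cst e (load n (round_robin k) ?t)
      \<le> pay n (round_robin k) (round_robin_payment e n k) ?t"
    by simp
next
  fix j t assume "t \<in> {lb_release k j..<lb_deadline k j} - {round_robin k j}"
  then have "\<not> j < k"
    by (auto simp: lb_release_def lb_deadline_def round_robin_def split: if_splits)
  then show "round_robin_payment e n k j
      \<le> max 0 (cst e (load n (round_robin k) t + 1)
                 - pay n (round_robin k) (round_robin_payment e n k) t)"
    by (simp add: round_robin_payment_def)
next
  fix j
  let ?others = "{j'. j' < n \<and> round_robin k j' = round_robin k j \<and> j' \<noteq> j}"
  show "round_robin_payment e n k j \<le> max 0 (cst e (load n (round_robin k) (round_robin k j))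
      - (\<Sum>j' \<in> ?others. round_robin_payment e n k j'))"
  proof (cases "j < k")
    case True
    then have "\<forall>j' \<in> ?others. \<not> j' < k"
      by (auto simp: round_robin_def)
    then have "(\<Sum>j' \<in> ?others. round_robin_payment e n k j') = 0"
      by (simp add: round_robin_payment_def)
    then show ?thesis
      using True by (simp add: round_robin_payment_def round_robin_def add.commute)
  qed (simp add: round_robin_payment_def)
qed (simp add: round_robin_payment_def cst_nonneg)

lemma load_round_robin_ge:
  assumes "i < k"
  shows "n div k \<le> load n (round_robin k) (i + 2)"
proof -
  have inj: "inj_on (\<lambda>m. m * k + i) {..<n div k}"
    using assms by (auto simp: inj_on_def)
  have image: "(\<lambda>m. m * k + i) ` {..<n div k} \<subseteq> {j. j < n \<and> round_robin k j = i + 2}"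
  proof clarify
    fix m assume "m < n div k"
    then have "m * k + k \<le> n"
      by (metis Suc_leI add.commute div_times_less_eq_dividend le_trans mult_Suc mult_le_mono1)
    then show "m * k + i < n \<and> round_robin k (m * k + i) = i + 2"
      using assms by (simp add: round_robin_def)
  qed
  show ?thesis
    using card_inj_on_le[OF inj image] by (simp add: load_def)
qed

lemma total_cost_round_robin_ge:
  assumes "0 \<le> e"
  shows "real k * real (n div k) powr e \<le> total_cost e n (k + 3) (round_robin k)"
proof -
  have "real k * real (n div k) powr e = (\<Sum>i<k. real (n div k) powr e)"
    by simp
  also have "\<dots> \<le> (\<Sum>i<k. cst e (load n (round_robin k) (i + 2)))"
    using load_round_robin_ge assms by (intro sum_mono) (simp add: cst_def powr_mono2)
  also have "\<dots> = (\<Sum>t = 2..k + 1. cst e (load n (round_robin k) t))"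
    by (rule sum.reindex_bij_witness[where i = "\<lambda>t. t - 2" and j = "\<lambda>i. i + 2"]) auto
  also have "\<dots> \<le> total_cost e n (k + 3) (round_robin k)"
    unfolding total_cost_def by (rule sum_mono2) (auto simp: cst_nonneg)
  finally show ?thesis .
qed

lemma total_cost_lb_release_le:
  assumes "0 < k" "0 < e"
  shows "total_cost e n (k + 3) (lb_release k) \<le> real k + real n powr e"
proof -
  let ?c = "\<lambda>t. cst e (load n (lb_release k) t)"
  have single: "?c t \<le> 1" if "t \<noteq> 2" for t
  proof -
    have "{j. j < n \<and> lb_release k j = t} \<subseteq> {t - 2}"
      using that by (auto simp: lb_release_def split: if_splits)
    then have "load n (lb_release k) t \<le> 1"
      unfolding load_def using card_mono[of "{t - 2}"] by simp
    then show ?thesis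
      using assms by (cases "load n (lb_release k) t") (auto simp: cst_def)
  qed
  have "total_cost e n (k + 3) (lb_release k) = (\<Sum>t = 2..k + 1. ?c t)"
    unfolding total_cost_def
    using assms(1) by (intro sum.mono_neutral_left[symmetric])
       (auto simp: cst_def load_def lb_release_def split: if_splits)
  also have "{2..k + 1} = insert 2 {3..k + 1}"
    using assms(1) by auto
  finally have split: "total_cost e n (k + 3) (lb_release k) = ?c 2 + (\<Sum>t = 3..k + 1. ?c t)"
    by simp
  have "?c 2 \<le> real n powr e"
    unfolding cst_def using load_le assms by (simp add: powr_mono2)
  moreover have "(\<Sum>t = 3..k + 1. ?c t) \<le> real k"
    using sum_bounded_above[of "{3..k + 1}" ?c 1] single by simp
  ultimately show ?thesis
    unfolding split by linarith
qed

lemma div_ceiling_powr_ge: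
  assumes "0 \<le> d" "4 \<le> real n powr (1 - d)"
  shows "real n powr (1 - d) / 4 \<le> real (n div nat \<lceil>real n powr d\<rceil>)"
proof -
  define k where "k = nat \<lceil>real n powr d\<rceil>"
  have "0 < n"
    using assms(2) by (cases n) auto
  then have a: "1 \<le> real n powr d"
    using assms(1) by (simp add: ge_one_powr_ge_zero)
  then have k: "real n powr d \<le> real k" "real k \<le> 2 * real n powr d"
    unfolding k_def by linarith+
  have "0 < k"
    using k a by linarith
  then have "n < (n div k + 1) * k"
    by (metis add.commute add_mult_distrib div_mult_mod_eq mod_less_divisor mult_1 nat_add_left_cancel_less)
  then have "real n < (real (n div k) + 1) * real k"
    by (metis of_nat_1 of_nat_add of_nat_less_iff of_nat_mult)
  then have "real n / real k - 1 < real (n div k)"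
    using a k by (simp add: field_simps)
  moreover have "real n / (2 * real n powr d) \<le> real n / real k"
    using a k \<open>0 < n\<close> by (intro divide_left_mono) (auto intro!: mult_pos_pos)
  moreover have "real n / real n powr d = real n powr (1 - d)"
    using \<open>0 < n\<close> by (simp add: powr_diff)
  ultimately show ?thesis
    using assms(2) unfolding k_def by simp
qed

lemma worst_poa_ge_powr:
  assumes "0 < d" "d < 1" "4 \<le> real n powr (1 - d)"
  shows "ereal (real n powr (d * (1 - d)) / 8) \<le> worst_poa d n"
proof -
  define k where "k = nat \<lceil>real n powr d\<rceil>"
  define q where "q = real (n div k)"
  define opt where "opt = opt_cost d n (k + 3) (lb_release k) (lb_deadline k)"
  have "0 < n"
    using assms(3) by (cases n) auto
  then have "real n powr d \<le> real k" "0 < k"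
    unfolding k_def by auto
  have "1 \<le> opt"
    unfolding opt_def using valid_game_lb[OF \<open>0 < k\<close>] \<open>0 < n\<close> assms(1)
    by (intro opt_cost_ge_1) auto
  have "opt \<le> total_cost d n (k + 3) (lb_release k)"
    unfolding opt_def using valid_game_lb[OF \<open>0 < k\<close>]
    by (intro opt_cost_le_total_cost valid_assign_release)
  also have "\<dots> \<le> real k + real n powr d"
    using \<open>0 < k\<close> assms(1) by (rule total_cost_lb_release_le)
  finally have "opt \<le> 2 * real k"
    using \<open>real n powr d \<le> real k\<close> by simp
  have "real n powr (d * (1 - d)) / 8 \<le> real n powr (d * (1 - d)) / (2 * 4 powr d)"
    using powr_mono[of d 1 4] assms(2) by (intro divide_left_mono) auto
  also have "\<dots> = (real n powr (1 - d) / 4) powr d / 2"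
    by (simp add: powr_divide powr_powr mult.commute)
  also have "\<dots> \<le> q powr d / 2"
    unfolding q_def k_def using div_ceiling_powr_ge assms by (simp add: powr_mono2)
  also have "\<dots> = real k * q powr d / (2 * real k)"
    using \<open>0 < k\<close> by simp
  also have "\<dots> \<le> total_cost d n (k + 3) (round_robin k) / opt"
    using total_cost_round_robin_ge[where n = n and k = k] total_cost_nonneg
      \<open>1 \<le> opt\<close> \<open>opt \<le> 2 * real k\<close> assms(1)
    unfolding q_def by (intro frac_le) auto
  finally show ?thesis
    unfolding opt_def
    using order.trans[OF _ worst_poa_ge_equilibrium[OF valid_game_lb is_NE_round_robin]] \<open>0 < k\<close>
    by (simp del: times_divide_eq_left)
qed

theorem theorem7:
  fixes d :: real
  assumes "0 < d" and "d < 1"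
  shows "\<exists>K>0. \<forall>\<^sub>F n in sequentially.
           worst_poa d n \<ge> ereal (K * real n powr (d * (1 - d)))"
proof (intro exI conjI)
  have "\<forall>\<^sub>F n in sequentially. 4 \<le> real n powr (1 - d)"
    using assms(2) by real_asymp
  then show "\<forall>\<^sub>F n in sequentially. worst_poa d n \<ge> ereal (1 / 8 * real n powr (d * (1 - d)))"
    by eventually_elim (use worst_poa_ge_powr assms in simp)
qed simp

end
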